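(* Let $\beta>0$, let $F$ be symmetric, positive on $\Gamma_+$, homogeneous of degree 1, with $F^\beta(1,\dots,1)=1$ and $\partial F/\partial\lambda_i>0$, and let $G:\mathbb{S}^n\times(0,\infty)\times(0,\infty)\to(0,\infty)$. Assume that whenever $G(x,ms_1,ms_2)\ge G(x,s_1,s_2)m^{-\beta}$ holds for some $x\in\mathbb{S}^n$ and positive $s_1,s_2,m$, necessarily $m\le1$. Then for any constant $c$, the equation $$G\big(x,u,\sqrt{u^2+|Du|^2}\big)F^\beta(D^2u+uI)=c\quad\text{on }\mathbb{S}^n$$ has at most one positive, smooth, uniformly convex solution $u$.
   Context: $\Gamma_+=\{\lambda\in\mathbb{R}^n:\lambda_i>0\}$; $F$ is applied to symmetric matrices via eigenvalues. $D$ is covariant differentiation on the round $\mathbb{S}^n$, $I$ the identity; uniformly convex means $D^2u+uI>0$. Note $\sqrt{u^2+|Du|^2}$ is the radial function $\rho$ of the convex body with support function $u$. *)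

theory Defs
  imports "HOL-Analysis.Analysis"
begin

definition partial_d :: "'m::finite \<Rightarrow> (real^'m \<Rightarrow> real) \<Rightarrow> real^'m \<Rightarrow> real" where
  "partial_d i f y = deriv (\<lambda>t. f (y + t *\<^sub>R axis i 1)) 0"

definition iter_partial :: "'m::finite list \<Rightarrow> (real^'m \<Rightarrow> real) \<Rightarrow> real^'m \<Rightarrow> real" where
  "iter_partial is f = foldr partial_d is f"

definition smooth_on :: "(real^'m::finite) set \<Rightarrow> (real^'m \<Rightarrow> real) \<Rightarrow> bool" where
  "smooth_on S f \<longleftrightarrow> (\<forall>is. iter_partial is f differentiable_on S)"

definition grad :: "(real^'m::finite \<Rightarrow> real) \<Rightarrow> real^'m \<Rightarrow> real^'m" where
  "grad f y = (\<chi> i. partial_d i f y)"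

definition hess :: "(real^'m::finite \<Rightarrow> real) \<Rightarrow> real^'m \<Rightarrow> real^'m^'m" where
  "hess f y = (\<chi> i j. partial_d j (partial_d i f) y)"

abbreviation unit_sphere :: "(real^'m::finite) set" where
  "unit_sphere \<equiv> sphere 0 1"

definition hom0_ext :: "(real^'m::finite \<Rightarrow> real) \<Rightarrow> real^'m \<Rightarrow> real" where
  "hom0_ext u y = u (y /\<^sub>R norm y)"

text \<open>Covariant gradient Du(x) on the sphere (a tangent vector at x): the Euclidean gradient
  of the degree-0 homogeneous extension.\<close>
definition sph_grad :: "(real^'m::finite \<Rightarrow> real) \<Rightarrow> real^'m \<Rightarrow> real^'m" where
  "sph_grad u x = grad (hom0_ext u) x"

text \<open>Covariant Hessian D^2u(x)(v,w) for tangent vectors v,w at x. For any extension f one has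
  D^2u(v,w) = Hess f(v,w) - (grad f . x)(v . w); for the degree-0 extension grad f . x = 0.\<close>
definition sph_hess :: "(real^'m::finite \<Rightarrow> real) \<Rightarrow> real^'m \<Rightarrow> real^'m \<Rightarrow> real^'m \<Rightarrow> real" where
  "sph_hess u x v w = v \<bullet> (hess (hom0_ext u) x *v w)"

definition tangent_frame :: "real^'m::finite \<Rightarrow> ('n::finite \<Rightarrow> real^'m) \<Rightarrow> bool" where
  "tangent_frame x e \<longleftrightarrow> (\<forall>i. e i \<bullet> x = 0) \<and>
     (\<forall>i j. e i \<bullet> e j = (if i = j then 1 else 0))"

definition W_matrix :: "(real^'m::finite \<Rightarrow> real) \<Rightarrow> real^'m \<Rightarrow> ('n::finite \<Rightarrow> real^'m) \<Rightarrow> real^'n^'n" where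
  "W_matrix u x e = (\<chi> i j. sph_hess u x (e i) (e j) + (if i = j then u x else 0))"

definition uniformly_convex :: "(real^'m::finite \<Rightarrow> real) \<Rightarrow> bool" where
  "uniformly_convex u \<longleftrightarrow> (\<forall>x\<in>unit_sphere. \<forall>v. v \<bullet> x = 0 \<and> v \<noteq> 0 \<longrightarrow>
      sph_hess u x v v + u x * (v \<bullet> v) > 0)"

definition diag_mat :: "real^'n::finite \<Rightarrow> real^'n^'n" where
  "diag_mat l = (\<chi> i j. if i = j then l $ i else 0)"

definition eigvals :: "real^'n::finite^'n \<Rightarrow> real^'n \<Rightarrow> bool" where
  "eigvals A l \<longleftrightarrow> (\<exists>Q. orthogonal_matrix Q \<and> A = Q ** diag_mat l ** transpose Q)"

definition apply_eig :: "(real^'n::finite \<Rightarrow> real) \<Rightarrow> real^'n^'n \<Rightarrow> real" where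
  "apply_eig F A = F (SOME l. eigvals A l)"

definition Gamma_plus :: "(real^'n::finite) set" where
  "Gamma_plus = {l. \<forall>i. l $ i > 0}"

end

(*
  Let u1, u2 be two solutions and let x0 maximise u1 / u2 on the sphere, with maximum M.
  The degree-0 homogeneous extensions then satisfy f1 <= M f2 near x0 with equality at x0, so
  Du1 = M Du2 and D^2 u1 <= M D^2 u2 at x0.  Hence D^2 u1 + u1 I <= M (D^2 u2 + u2 I) in the
  Loewner order, and the radial functions satisfy rho1 = M rho2 at x0.  A Loewner inequality
  between symmetric matrices dominates the eigenvalues after a permutation (count the eigenvalues
  above each level t, Courant-Fischer style, and match greedily); since F is symmetric,
  increasing and 1-homogeneous this gives F(D^2 u1 + u1 I) <= M F(D^2 u2 + u2 I) at x0.
  Comparing the two equations at x0 yields G(x0, M u2, M rho2) >= G(x0, u2, rho2) M^(-beta),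
  so M <= 1, i.e. u1 <= u2; by symmetry u1 = u2.
*)
theory Submission
  imports Defs
begin

section \<open>Partial derivatives, Schwarz's theorem and second-order conditions\<close>

lemma has_real_derivative_line:
  fixes f :: "real^'m::finite \<Rightarrow> real"
  assumes "(f has_derivative f') (at (y + t *\<^sub>R v))"
  shows "((\<lambda>s. f (y + s *\<^sub>R v)) has_real_derivative f' v) (at t)"
proof -
  have lin: "linear f'" using assms has_derivative_linear by blast
  have "((\<lambda>s. y + s *\<^sub>R v) has_derivative (\<lambda>h. h *\<^sub>R v)) (at t)"
    by (auto intro!: derivative_eq_intros)
  from has_derivative_compose[OF this assms]
  have "((\<lambda>s. f (y + s *\<^sub>R v)) has_derivative (\<lambda>h. f' (h *\<^sub>R v))) (at t)" by simp
  moreover have "(\<lambda>h. f' (h *\<^sub>R v)) = (*) (f' v)"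
    by (auto simp: fun_eq_iff linear_cmul[OF lin])
  ultimately show ?thesis by (simp add: has_field_derivative_def)
qed

lemma has_derivative_imp_partial_d:
  fixes f :: "real^'m::finite \<Rightarrow> real"
  assumes "(f has_derivative f') (at y)"
  shows "partial_d i f y = f' (axis i 1)"
  unfolding partial_d_def
  by (rule DERIV_imp_deriv, rule has_real_derivative_line) (use assms in simp)

lemma has_derivative_grad:
  fixes f :: "real^'m::finite \<Rightarrow> real"
  assumes "f differentiable (at y)"
  shows "(f has_derivative (\<lambda>v. grad f y \<bullet> v)) (at y)"
proof -
  obtain f' where f': "(f has_derivative f') (at y)" using assms differentiable_def by blast
  have lin: "linear f'" using f' has_derivative_linear by blast
  have "f' v = grad f y \<bullet> v" for v
  proof -
    have "f' v = f' (\<Sum>i\<in>UNIV. (v$i) *\<^sub>R axis i 1)"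
      using basis_expansion[of v] by (simp add: scalar_mult_eq_scaleR)
    also have "\<dots> = (\<Sum>i\<in>UNIV. v$i * f' (axis i 1))"
      by (simp add: linear_sum[OF lin] linear_cmul[OF lin])
    also have "\<dots> = grad f y \<bullet> v"
      by (simp add: grad_def inner_vec_def has_derivative_imp_partial_d[OF f'] mult.commute)
    finally show ?thesis .
  qed
  then have "f' = (\<lambda>v. grad f y \<bullet> v)" by auto
  with f' show ?thesis by simp
qed

lemma has_real_derivative_line_grad:
  fixes f :: "real^'m::finite \<Rightarrow> real"
  assumes "f differentiable (at (y + t *\<^sub>R v))"
  shows "((\<lambda>s. f (y + s *\<^sub>R v)) has_real_derivative grad f (y + t *\<^sub>R v) \<bullet> v) (at t)"
  using has_real_derivative_line[OF has_derivative_grad[OF assms]] .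

lemma partial_d_eq_grad_inner_axis:
  fixes f :: "real^'m::finite \<Rightarrow> real"
  assumes "f differentiable (at y)"
  shows "partial_d i f y = grad f y \<bullet> axis i 1"
  using has_derivative_imp_partial_d[OF has_derivative_grad[OF assms]] .

lemma smooth_on_differentiable_at:
  assumes "smooth_on S f" "open S" "x \<in> S"
  shows "f differentiable (at x)" "partial_d i f differentiable (at x)"
proof -
  have "iter_partial [] f differentiable_on S" "iter_partial [i] f differentiable_on S"
    using assms(1) unfolding smooth_on_def by blast+
  then show "f differentiable (at x)" "partial_d i f differentiable (at x)"
    using assms(2,3) by (auto simp: iter_partial_def differentiable_on_eq_differentiable_at)
qed

lemma has_real_derivative_grad_inner_line:
  fixes f :: "real^'m::finite \<Rightarrow> real"
  assumes "\<And>i. partial_d i f differentiable (at x)"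
  shows "((\<lambda>t. grad f (x + t *\<^sub>R v) \<bullet> v) has_real_derivative v \<bullet> (hess f x *v v)) (at 0)"
proof -
  have "((\<lambda>t. \<Sum>i\<in>UNIV. partial_d i f (x + t *\<^sub>R v) * v$i) has_real_derivative
      (\<Sum>i\<in>UNIV. (grad (partial_d i f) x \<bullet> v) * v$i)) (at 0)"
    using assms by (intro DERIV_sum DERIV_cmult_right has_real_derivative_line_grad[where t=0, simplified])
  then show ?thesis
    by (simp add: grad_def hess_def inner_vec_def matrix_vector_mult_def mult.commute)
qed

definition second_difference :: "(real^'m::finite \<Rightarrow> real) \<Rightarrow> real^'m \<Rightarrow> 'm \<Rightarrow> 'm \<Rightarrow> real \<Rightarrow> real"
  where "second_difference f x i j h =
    f (x + h *\<^sub>R axis i 1 + h *\<^sub>R axis j 1) - f (x + h *\<^sub>R axis i 1) - f (x + h *\<^sub>R axis j 1) + f x"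

lemma second_difference_commute: "second_difference f x i j h = second_difference f x j i h"
  by (simp add: second_difference_def algebra_simps)

lemma second_difference_mvt:
  fixes f :: "real^'m::finite \<Rightarrow> real"
  assumes h: "h > 0"
    and fd: "\<And>w. norm w \<le> 2 * h \<Longrightarrow> f differentiable (at (x + w))"
  obtains \<xi> where "0 < \<xi>" "\<xi> < h" "second_difference f x i j h
    = h * (partial_d i f (x + h *\<^sub>R axis j 1 + \<xi> *\<^sub>R axis i 1) - partial_d i f (x + \<xi> *\<^sub>R axis i 1))"
proof -
  define ei :: "real^'m" where "ei = axis i 1"
  define ej :: "real^'m" where "ej = axis j 1"
  define \<phi> where "\<phi> = (\<lambda>s. f (x + h *\<^sub>R ej + s *\<^sub>R ei) - f (x + s *\<^sub>R ei))"
  define \<phi>' where "\<phi>' = (\<lambda>s. partial_d i f (x + h *\<^sub>R ej + s *\<^sub>R ei) - partial_d i f (x + s *\<^sub>R ei))"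
  have der: "(\<phi> has_real_derivative \<phi>' s) (at s)" if "0 \<le> s" "s \<le> h" for s
  proof -
    have "norm (h *\<^sub>R ej + s *\<^sub>R ei) \<le> norm (h *\<^sub>R ej) + norm (s *\<^sub>R ei)"
      by (rule norm_triangle_ineq)
    also have "\<dots> \<le> 2 * h" using that by (simp add: ei_def ej_def)
    finally have d1: "f differentiable (at (x + h *\<^sub>R ej + s *\<^sub>R ei))"
      using fd by (simp add: add.assoc)
    have d2: "f differentiable (at (x + s *\<^sub>R ei))"
      using fd[of "s *\<^sub>R ei"] that h by (simp add: ei_def)
    show ?thesis
      unfolding \<phi>_def \<phi>'_def partial_d_eq_grad_inner_axis[OF d1] partial_d_eq_grad_inner_axis[OF d2]
      using DERIV_diff[OF has_real_derivative_line_grad[OF d1] has_real_derivative_line_grad[OF d2]]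
      by (simp add: ei_def)
  qed
  obtain \<xi> where "0 < \<xi>" "\<xi> < h" "\<phi> h - \<phi> 0 = (h - 0) * \<phi>' \<xi>"
    using MVT2[of 0 h \<phi> \<phi>'] der h by auto
  then show thesis
    by (intro that[of \<xi>]) (simp_all add: second_difference_def \<phi>_def \<phi>'_def ei_def ej_def algebra_simps)
qed

lemma second_difference_approx:
  fixes f :: "real^'m::finite \<Rightarrow> real"
  assumes S: "open S" "x \<in> S" and fd: "\<And>y. y \<in> S \<Longrightarrow> f differentiable (at y)"
    and gd: "partial_d i f differentiable (at x)" and e: "e > 0"
  obtains d where "d > 0" "\<And>h. 0 < h \<Longrightarrow> h < d \<Longrightarrow>
    \<bar>second_difference f x i j h - h\<^sup>2 * partial_d j (partial_d i f) x\<bar> \<le> 3 * e * h\<^sup>2"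
proof -
  define g where "g = partial_d i f"
  define L where "L = (\<lambda>w. grad g x \<bullet> w)"
  have gL: "(g has_derivative L) (at x)" unfolding L_def g_def using has_derivative_grad[OF gd] .
  obtain d1 where d1: "d1 > 0"
    "\<And>y. norm (y - x) < d1 \<Longrightarrow> norm (g y - g x - L (y - x)) \<le> e * norm (y - x)"
    using gL e unfolding has_derivative_at_alt by blast
  obtain r where r: "r > 0" "ball x r \<subseteq> S" using S open_contains_ball by blast
  define d where "d = min d1 r / 2"
  have "\<bar>second_difference f x i j h - h\<^sup>2 * partial_d j g x\<bar> \<le> 3 * e * h\<^sup>2"
    if h: "0 < h" "h < d" for h
  proof -
    have "f differentiable (at (x + w))" if "norm w \<le> 2 * h" for w
      using that h r(2) fd unfolding d_def by (force simp: dist_norm subset_iff)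
    then obtain \<xi> where \<xi>: "0 < \<xi>" "\<xi> < h" "second_difference f x i j h
        = h * (g (x + h *\<^sub>R axis j 1 + \<xi> *\<^sub>R axis i 1) - g (x + \<xi> *\<^sub>R axis i 1))"
      using second_difference_mvt[OF h(1)] unfolding g_def by metis
    define w1 :: "real^'m" where "w1 = h *\<^sub>R axis j 1 + \<xi> *\<^sub>R axis i 1"
    define w2 :: "real^'m" where "w2 = \<xi> *\<^sub>R axis i 1"
    have "norm w1 \<le> norm (h *\<^sub>R axis j 1 :: real^'m) + norm (\<xi> *\<^sub>R axis i 1 :: real^'m)"
      unfolding w1_def by (rule norm_triangle_ineq)
    then have w: "norm w1 \<le> 2 * h" "norm w2 \<le> h" using \<xi> h by (simp_all add: w2_def)
    have e1: "\<bar>g (x + w1) - g x - L w1\<bar> \<le> e * norm w1"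
      using d1(2)[of "x + w1"] w h unfolding d_def by auto
    have e2: "\<bar>g (x + w2) - g x - L w2\<bar> \<le> e * norm w2"
      using d1(2)[of "x + w2"] w h unfolding d_def by auto
    have "L w1 - L w2 = h * L (axis j 1)"
      by (simp add: L_def w1_def w2_def inner_add_right)
    then have "\<bar>(g (x + w1) - g (x + w2)) - h * L (axis j 1)\<bar> \<le> e * (2 * h) + e * h"
      using e1 e2 w e by (smt (verit) mult_left_mono)
    then have "h * \<bar>(g (x + w1) - g (x + w2)) - h * L (axis j 1)\<bar> \<le> h * (3 * e * h)"
      using h by (intro mult_left_mono) auto
    moreover have "partial_d j g x = L (axis j 1)" by (rule has_derivative_imp_partial_d[OF gL])
    then have "second_difference f x i j h - h\<^sup>2 * partial_d j g x
        = h * ((g (x + w1) - g (x + w2)) - h * L (axis j 1))"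
      using \<xi>(3) unfolding w1_def w2_def by (simp add: power2_eq_square algebra_simps)
    ultimately show ?thesis using h by (simp add: abs_mult power2_eq_square mult_ac)
  qed
  moreover have "d > 0" using d1 r by (simp add: d_def)
  ultimately show thesis using that unfolding g_def by blast
qed

lemma partial_d_commute:
  fixes f :: "real^'m::finite \<Rightarrow> real"
  assumes S: "open S" "x \<in> S" and fd: "\<And>y. y \<in> S \<Longrightarrow> f differentiable (at y)"
    and gi: "partial_d i f differentiable (at x)" and gj: "partial_d j f differentiable (at x)"
  shows "partial_d j (partial_d i f) x = partial_d i (partial_d j f) x"
proof -
  define A where "A = partial_d j (partial_d i f) x"
  define B where "B = partial_d i (partial_d j f) x"
  have est: "\<bar>A - B\<bar> \<le> 6 * e" if e: "e > 0" for e
  proof -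
    obtain d1 where d1: "d1 > 0"
      "\<And>h. 0 < h \<Longrightarrow> h < d1 \<Longrightarrow> \<bar>second_difference f x i j h - h\<^sup>2 * A\<bar> \<le> 3 * e * h\<^sup>2"
      using second_difference_approx[OF S fd gi e, of j] unfolding A_def by blast
    obtain d2 where d2: "d2 > 0"
      "\<And>h. 0 < h \<Longrightarrow> h < d2 \<Longrightarrow> \<bar>second_difference f x j i h - h\<^sup>2 * B\<bar> \<le> 3 * e * h\<^sup>2"
      using second_difference_approx[OF S fd gj e, of i] unfolding B_def by blast
    define h where "h = min d1 d2 / 2"
    have h: "0 < h" "h < d1" "h < d2" using d1 d2 unfolding h_def by auto
    have "\<bar>h\<^sup>2 * A - h\<^sup>2 * B\<bar> \<le> 6 * e * h\<^sup>2"
      using d1(2)[OF h(1,2)] d2(2)[OF h(1,3)] second_difference_commute[of f x i j h]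
      by (simp add: abs_le_iff)
    then have "h\<^sup>2 * \<bar>A - B\<bar> \<le> h\<^sup>2 * (6 * e)"
      by (simp add: abs_mult left_diff_distrib[symmetric] mult_ac)
    then show ?thesis using h by simp
  qed
  have "\<bar>A - B\<bar> \<le> 0 + e" if "e > 0" for e using est[of "e / 6"] that by simp
  then have "\<bar>A - B\<bar> \<le> 0" by (rule field_le_epsilon)
  then show ?thesis unfolding A_def B_def by simp
qed

lemma hess_symmetric:
  fixes f :: "real^'m::finite \<Rightarrow> real"
  assumes "open S" "x \<in> S" "\<And>y. y \<in> S \<Longrightarrow> f differentiable (at y)"
    "\<And>i. partial_d i f differentiable (at x)"
  shows "transpose (hess f x) = hess f x"
  using partial_d_commute[OF assms(1-3) assms(4) assms(4)]
  by (simp add: vec_eq_iff transpose_def hess_def)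

lemma local_max_second_derivative_nonpos:
  fixes g g' :: "real \<Rightarrow> real"
  assumes r: "r > 0"
    and g: "\<And>t. \<bar>t\<bar> < r \<Longrightarrow> (g has_real_derivative g' t) (at t)"
    and max: "\<And>t. \<bar>t\<bar> < r \<Longrightarrow> g t \<le> g 0"
    and g': "(g' has_real_derivative d) (at 0)"
  shows "d \<le> 0"
proof (rule ccontr)
  assume "\<not> d \<le> 0"
  then obtain \<delta> where \<delta>: "\<delta> > 0" "\<And>h. 0 < h \<Longrightarrow> h < \<delta> \<Longrightarrow> g' 0 < g' (0 + h)"
    using DERIV_pos_inc_right[OF g'] by auto
  have "g' 0 = 0"
    using DERIV_local_max[OF g[of 0] r] max r by (simp add: dist_real_def)
  define h where "h = min \<delta> r / 2"
  have h: "0 < h" "h < \<delta>" "h < r" using \<delta>(1) r by (auto simp: h_def)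
  obtain z where z: "0 < z" "z < h" "g h - g 0 = (h - 0) * g' z"
    using MVT2[of 0 h g g'] g h by auto
  have "g' z > 0" using \<delta>(2)[of z] z h \<open>g' 0 = 0\<close> by simp
  then have "h * g' z > 0" using h by simp
  then have "g h > g 0" using z(3) by simp
  with max[of h] h show False by simp
qed

lemma touching_from_above_grad_hess:
  fixes f1 f2 :: "real^'m::finite \<Rightarrow> real"
  assumes S: "open S" "x \<in> S"
    and d1: "\<And>y. y \<in> S \<Longrightarrow> f1 differentiable (at y)"
    and d2: "\<And>y. y \<in> S \<Longrightarrow> f2 differentiable (at y)"
    and p1: "\<And>i. partial_d i f1 differentiable (at x)"
    and p2: "\<And>i. partial_d i f2 differentiable (at x)"
    and le: "\<And>y. y \<in> S \<Longrightarrow> f1 y \<le> M * f2 y" and eq: "f1 x = M * f2 x"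
  shows "grad f1 x = M *\<^sub>R grad f2 x"
    and "v \<bullet> (hess f1 x *v v) \<le> M * (v \<bullet> (hess f2 x *v v))"
proof -
  obtain r where r: "r > 0" "ball x r \<subseteq> S" using S open_contains_ball by blast
  define R where "R = (\<lambda>w::real^'m. r / (norm w + 1))"
  have R: "R w > 0" for w using r by (simp add: R_def add_nonneg_pos)
  have inS: "x + t *\<^sub>R w \<in> S" if "\<bar>t\<bar> < R w" for t w
  proof -
    have "\<bar>t\<bar> * norm w \<le> \<bar>t\<bar> * (norm w + 1)" by (simp add: mult_left_mono)
    also have "\<dots> < r" using that by (simp add: R_def pos_less_divide_eq add_nonneg_pos)
    finally show ?thesis using r(2) by (auto simp: dist_norm)
  qed
  define g where "g = (\<lambda>w t. f1 (x + t *\<^sub>R w) - M * f2 (x + t *\<^sub>R w))"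
  define g' where "g' = (\<lambda>w t. grad f1 (x + t *\<^sub>R w) \<bullet> w - M * (grad f2 (x + t *\<^sub>R w) \<bullet> w))"
  have g: "(g w has_real_derivative g' w t) (at t)" if "\<bar>t\<bar> < R w" for w t
    unfolding g_def g'_def
    by (intro DERIV_diff DERIV_cmult has_real_derivative_line_grad d1 d2 inS that)
  have max: "g w t \<le> g w 0" if "\<bar>t\<bar> < R w" for w t
    using le[OF inS[OF that]] eq by (simp add: g_def)
  have "(grad f1 x - M *\<^sub>R grad f2 x) \<bullet> w = 0" for w
    using DERIV_local_max[OF g[of 0 w] R[of w]] max[of _ w] R[of w]
    by (simp add: dist_real_def g'_def inner_diff_left)
  from this[of "grad f1 x - M *\<^sub>R grad f2 x"]
  show "grad f1 x = M *\<^sub>R grad f2 x" by simp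
  have "(g' v has_real_derivative v \<bullet> (hess f1 x *v v) - M * (v \<bullet> (hess f2 x *v v))) (at 0)"
    unfolding g'_def
    by (intro DERIV_diff DERIV_cmult has_real_derivative_grad_inner_line p1 p2)
  from local_max_second_derivative_nonpos[OF R g max this]
  show "v \<bullet> (hess f1 x *v v) \<le> M * (v \<bullet> (hess f2 x *v v))" by simp
qed

section \<open>Spectral theorem for symmetric matrices\<close>

lemma symmetric_matrix_inner_commute:
  fixes A :: "real^'n::finite^'n"
  assumes "transpose A = A"
  shows "(A *v x) \<bullet> y = x \<bullet> (A *v y)"
  by (metis assms dot_lmul_matrix transpose_matrix_vector)

lemma exists_nonzero_orthogonal:
  fixes S :: "(real^'n::finite) set"
  assumes "finite S" "card S < CARD('n)"
  obtains x where "x \<noteq> 0" "\<forall>s\<in>S. x \<bullet> s = 0"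
proof -
  have "dim S < DIM(real^'n)" using real_vector.dim_le_card'[OF assms(1)] assms(2) by simp
  then obtain x where "x \<noteq> 0" "\<And>y. y \<in> span S \<Longrightarrow> orthogonal x y"
    using orthogonal_to_subspace_exists by metis
  then show thesis using that by (auto simp: orthogonal_def intro: span_base)
qed

lemma rayleigh_max_orthogonal:
  fixes A :: "real^'n::finite^'n" and S :: "(real^'n) set"
  assumes "finite S" "card S < CARD('n)"
  obtains v where "norm v = 1" "\<forall>s\<in>S. v \<bullet> s = 0"
    "\<And>w. \<forall>s\<in>S. w \<bullet> s = 0 \<Longrightarrow> w \<bullet> (A *v w) \<le> (v \<bullet> (A *v v)) * (w \<bullet> w)"
proof -
  define T where "T = {w. \<forall>s\<in>S. w \<bullet> s = 0} \<inter> sphere 0 1"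
  define q where "q = (\<lambda>w::real^'n. w \<bullet> (A *v w))"
  have "closed {w::real^'n. \<forall>s\<in>S. w \<bullet> s = 0}"
    by (simp add: Collect_ball_eq closed_INT closed_Collect_eq continuous_on_inner
        continuous_on_const continuous_on_id)
  then have "compact T" unfolding T_def by (intro closed_Int_compact) auto
  moreover obtain x where "x \<noteq> 0" "\<forall>s\<in>S. x \<bullet> s = 0" using exists_nonzero_orthogonal[OF assms] .
  then have "x /\<^sub>R norm x \<in> T" unfolding T_def by (auto simp: inner_commute)
  then have "T \<noteq> {}" by blast
  moreover have "continuous_on T q" unfolding q_def
    by (intro continuous_intros linear_continuous_on matrix_vector_mul_bounded_linear)
  ultimately obtain v where v: "v \<in> T" "\<forall>y\<in>T. q y \<le> q v"
    using continuous_attains_sup by blast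
  have "q w \<le> q v * (w \<bullet> w)" if w: "\<forall>s\<in>S. w \<bullet> s = 0" for w
  proof (cases "w = 0")
    case True then show ?thesis by (simp add: q_def)
  next
    case False
    have "w /\<^sub>R norm w \<in> T" using w False unfolding T_def by (auto simp: inner_commute)
    then have "q (w /\<^sub>R norm w) \<le> q v" using v(2) by blast
    moreover have "q (w /\<^sub>R norm w) = q w / (norm w)\<^sup>2"
      by (simp add: q_def matrix_vector_mult_scaleR power2_eq_square field_simps)
    ultimately show ?thesis using False by (simp add: divide_le_eq power2_norm_eq_inner)
  qed
  with v(1) show thesis using that unfolding T_def q_def by auto
qed

lemma eq_0_if_quadratic_nonpos:
  fixes a b :: real
  assumes "a \<ge> 0" "\<And>t. 2 * t * a + t\<^sup>2 * b \<le> 0"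
  shows "a = 0"
proof (rule ccontr)
  assume "a \<noteq> 0"
  with assms(1) have a: "a > 0" by simp
  define t where "t = a / (\<bar>b\<bar> + 1)"
  have t: "t > 0" using a by (simp add: t_def add_nonneg_pos)
  have "t * \<bar>b\<bar> \<le> a"
    using a by (simp add: t_def field_simps)
  then have "t * (2 * a + t * b) > 0"
    using t a by (smt (verit) abs_ge_self abs_minus_cancel mult_less_cancel_left_pos mult_minus_right)
  with assms(2)[of t] show False by (simp add: power2_eq_square algebra_simps)
qed

lemma symmetric_eigenvector_orthogonal:
  fixes A :: "real^'n::finite^'n" and S :: "(real^'n) set"
  assumes sym: "transpose A = A" and S: "finite S" "card S < CARD('n)"
    and inv: "\<And>w s. s \<in> S \<Longrightarrow> w \<bullet> s = 0 \<Longrightarrow> (A *v w) \<bullet> s = 0"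
  obtains v where "norm v = 1" "\<forall>s\<in>S. v \<bullet> s = 0" "A *v v = (v \<bullet> (A *v v)) *\<^sub>R v"
proof -
  obtain v where v: "norm v = 1" "\<forall>s\<in>S. v \<bullet> s = 0"
    and max: "\<And>w. \<forall>s\<in>S. w \<bullet> s = 0 \<Longrightarrow> w \<bullet> (A *v w) \<le> (v \<bullet> (A *v v)) * (w \<bullet> w)"
    using rayleigh_max_orthogonal[OF S] by metis
  define \<mu> where "\<mu> = v \<bullet> (A *v v)"
  define w where "w = A *v v - \<mu> *\<^sub>R v"
  have vv: "v \<bullet> v = 1" using v(1) by (simp add: norm_eq_1)
  have wS: "\<forall>s\<in>S. w \<bullet> s = 0" using v(2) inv by (simp add: w_def inner_diff_left)
  have "v \<bullet> w = 0" by (simp add: w_def \<mu>_def inner_diff_right vv)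
  then have wv: "w \<bullet> v = 0" by (simp add: inner_commute)
  have Awv: "w \<bullet> (A *v v) = w \<bullet> w" using wv by (simp add: w_def inner_diff_right)
  \<comment> \<open>maximality of \<open>v\<close> along the admissible line \<open>v + t w\<close> forces \<open>w = 0\<close>\<close>
  have "2 * t * (w \<bullet> w) + t\<^sup>2 * (w \<bullet> (A *v w) - \<mu> * (w \<bullet> w)) \<le> 0" for t
  proof -
    have "\<forall>s\<in>S. (v + t *\<^sub>R w) \<bullet> s = 0" using v(2) wS by (simp add: inner_add_left)
    from max[OF this] have "(v + t *\<^sub>R w) \<bullet> (A *v (v + t *\<^sub>R w))
        \<le> \<mu> * ((v + t *\<^sub>R w) \<bullet> (v + t *\<^sub>R w))" by (simp add: \<mu>_def)
    moreover have "v \<bullet> (A *v w) = w \<bullet> (A *v v)"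
      using symmetric_matrix_inner_commute[OF sym, of w v] by (simp add: inner_commute)
    ultimately show ?thesis using vv wv Awv
      by (simp add: matrix_vector_right_distrib matrix_vector_mult_scaleR inner_add_left
          inner_add_right inner_commute power2_eq_square algebra_simps \<mu>_def)
  qed
  then have "w \<bullet> w = 0" by (intro eq_0_if_quadratic_nonpos) auto
  then have "A *v v = \<mu> *\<^sub>R v" by (simp add: w_def)
  with v show thesis using that unfolding \<mu>_def by blast
qed

lemma orthonormal_eigenvectors:
  fixes A :: "real^'n::finite^'n"
  assumes sym: "transpose A = A" and k: "k \<le> CARD('n)"
  shows "\<exists>S. finite S \<and> card S = k \<and> (\<forall>s\<in>S. norm s = 1 \<and> A *v s = (s \<bullet> (A *v s)) *\<^sub>R s)
    \<and> (\<forall>s\<in>S. \<forall>t\<in>S. s \<noteq> t \<longrightarrow> s \<bullet> t = 0)"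
  using k
proof (induction k)
  case 0
  show ?case by (intro exI[of _ "{}"]) simp
next
  case (Suc k)
  then obtain S where S: "finite S" "card S = k"
    "\<forall>s\<in>S. norm s = 1 \<and> A *v s = (s \<bullet> (A *v s)) *\<^sub>R s"
    "\<forall>s\<in>S. \<forall>t\<in>S. s \<noteq> t \<longrightarrow> s \<bullet> t = 0" by (metis Suc_leD)
  have inv: "(A *v w) \<bullet> s = 0" if "s \<in> S" "w \<bullet> s = 0" for w s
  proof -
    have "(A *v w) \<bullet> s = w \<bullet> (A *v s)" by (rule symmetric_matrix_inner_commute[OF sym])
    also have "\<dots> = (s \<bullet> (A *v s)) * (w \<bullet> s)" using S(3) that(1) by (metis inner_scaleR_right)
    finally show ?thesis using that(2) by simp
  qed
  have "card S < CARD('n)" using S(2) Suc.prems by simp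
  then obtain v where v: "norm v = 1" "\<forall>s\<in>S. v \<bullet> s = 0" "A *v v = (v \<bullet> (A *v v)) *\<^sub>R v"
    using symmetric_eigenvector_orthogonal[OF sym S(1) _ inv] by blast
  have "v \<notin> S" using v(1,2) by (metis inner_eq_zero_iff norm_zero zero_neq_one)
  show ?case
  proof (intro exI[of _ "insert v S"] conjI)
    show "finite (insert v S)" "card (insert v S) = Suc k" using S(1,2) \<open>v \<notin> S\<close> by simp_all
    show "\<forall>s\<in>insert v S. norm s = 1 \<and> A *v s = (s \<bullet> (A *v s)) *\<^sub>R s" using S(3) v(1,3) by blast
    show "\<forall>s\<in>insert v S. \<forall>t\<in>insert v S. s \<noteq> t \<longrightarrow> s \<bullet> t = 0"
      using S(4) v(2) by (metis inner_commute insert_iff)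
  qed
qed

lemma symmetric_matrix_eigvals:
  fixes A :: "real^'n::finite^'n"
  assumes sym: "transpose A = A"
  shows "\<exists>l. eigvals A l"
proof -
  obtain S where S: "finite S" "card S = CARD('n)"
    "\<forall>s\<in>S. norm s = 1 \<and> A *v s = (s \<bullet> (A *v s)) *\<^sub>R s"
    "\<forall>s\<in>S. \<forall>t\<in>S. s \<noteq> t \<longrightarrow> s \<bullet> t = 0"
    using orthonormal_eigenvectors[OF sym order_refl] by blast
  have "\<exists>b :: 'n \<Rightarrow> real^'n. bij_betw b UNIV S" using S(1,2) by (simp add: bij_betw_iff_card)
  then obtain b :: "'n \<Rightarrow> real^'n" where b: "bij_betw b UNIV S" ..
  have bS: "b i \<in> S" for i using b by (auto simp: bij_betw_def)
  have binj: "b i = b j \<Longrightarrow> i = j" for i j using b by (auto simp: bij_betw_def inj_on_def)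
  define Q :: "real^'n^'n" where "Q = (\<chi> r c. b c $ r)"
  define l :: "real^'n" where "l = (\<chi> c. b c \<bullet> (A *v b c))"
  have col: "column c Q = b c" for c by (simp add: column_def Q_def vec_eq_iff)
  have "norm (b i) = 1" for i using S(3) bS by blast
  moreover have "b i \<bullet> b j = 0" if "i \<noteq> j" for i j using S(4) bS binj that by blast
  ultimately have oQ: "orthogonal_matrix Q"
    by (simp add: orthogonal_matrix_orthonormal_columns col orthogonal_def)
  have "A ** Q = Q ** diag_mat l"
  proof -
    have "A *v b c = l $ c *\<^sub>R b c" for c using S(3) bS[of c] by (simp add: l_def)
    then show ?thesis
      by (simp add: vec_eq_iff matrix_matrix_mult_def matrix_vector_mult_def diag_mat_def Q_def
          if_distrib cong: if_cong)
  qed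
  have "A = A ** (Q ** transpose Q)" using oQ by (simp add: orthogonal_matrix_def)
  also have "\<dots> = Q ** diag_mat l ** transpose Q" by (simp only: matrix_mul_assoc \<open>A ** Q = _\<close>)
  finally show ?thesis unfolding eigvals_def using oQ by blast
qed

lemma diag_mat_mult_vector: "diag_mat a *v y = (\<chi> i. a$i * y$i)"
  unfolding diag_mat_def matrix_vector_mult_def
  by (simp add: vec_eq_iff if_distrib if_distribR sum.delta cong: if_cong)

lemma eigvals_quadratic_form:
  fixes P :: "real^'n::finite^'n"
  assumes "A = P ** diag_mat a ** transpose P"
  shows "x \<bullet> (A *v x) = (\<Sum>i\<in>UNIV. a$i * ((transpose P *v x)$i)\<^sup>2)"
proof -
  define y where "y = transpose P *v x"
  have "x \<bullet> (A *v x) = x \<bullet> (P *v (diag_mat a *v y))"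
    by (simp only: assms y_def matrix_vector_mul_assoc matrix_mul_assoc)
  also have "\<dots> = y \<bullet> (diag_mat a *v y)"
    by (simp add: y_def dot_lmul_matrix)
  also have "\<dots> = (\<Sum>i\<in>UNIV. a$i * (y$i)\<^sup>2)"
    by (simp add: inner_vec_def diag_mat_mult_vector power2_eq_square mult_ac)
  finally show ?thesis unfolding y_def .
qed

lemma orthogonal_matrix_sum_sq:
  fixes P :: "real^'n::finite^'n"
  assumes "orthogonal_matrix P"
  shows "(\<Sum>i\<in>UNIV. ((transpose P *v x)$i)\<^sup>2) = x \<bullet> x"
proof -
  have "(\<Sum>i\<in>UNIV. ((transpose P *v x)$i)\<^sup>2) = (transpose P *v x) \<bullet> (transpose P *v x)"
    by (simp add: inner_vec_def power2_eq_square)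
  also have "\<dots> = x \<bullet> (P *v (transpose P *v x))"
    by (simp add: dot_lmul_matrix)
  also have "P *v (transpose P *v x) = x"
    using assms by (simp only: matrix_vector_mul_assoc orthogonal_matrix_def matrix_vector_mul_lid)
  finally show ?thesis .
qed

lemma transpose_mult_vector_nth: "(transpose P *v x) $ i = column i P \<bullet> (x::real^'n::finite)"
  by (simp add: matrix_vector_mult_def transpose_def column_def inner_vec_def mult.commute)

lemma eigvals_quadratic_ge:
  fixes P :: "real^'n::finite^'n"
  assumes P: "orthogonal_matrix P" "A = P ** diag_mat a ** transpose P"
    and x: "\<And>i. a$i < t \<Longrightarrow> column i P \<bullet> x = 0"
  shows "t * (x \<bullet> x) \<le> x \<bullet> (A *v x)"
proof -
  define y where "y = transpose P *v x"
  have y: "y$i = column i P \<bullet> x" for i unfolding y_def by (rule transpose_mult_vector_nth)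
  have "t * (x \<bullet> x) = (\<Sum>i\<in>UNIV. t * (y$i)\<^sup>2)"
    unfolding y_def orthogonal_matrix_sum_sq[OF P(1), symmetric] by (rule sum_distrib_left)
  also have "\<dots> \<le> (\<Sum>i\<in>UNIV. a$i * (y$i)\<^sup>2)"
  proof (rule sum_mono)
    fix i
    show "t * (y$i)\<^sup>2 \<le> a$i * (y$i)\<^sup>2"
    proof (cases "a$i < t")
      case True then show ?thesis using x y by simp
    next
      case False then show ?thesis by (intro mult_right_mono) auto
    qed
  qed
  also have "\<dots> = x \<bullet> (A *v x)" unfolding y_def by (rule eigvals_quadratic_form[OF P(2), symmetric])
  finally show ?thesis .
qed

lemma eigvals_quadratic_less:
  fixes Q :: "real^'n::finite^'n"
  assumes Q: "orthogonal_matrix Q" "B = Q ** diag_mat b ** transpose Q"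
    and "x \<noteq> 0" and x: "\<And>j. t \<le> b$j \<Longrightarrow> column j Q \<bullet> x = 0"
  shows "x \<bullet> (B *v x) < t * (x \<bullet> x)"
proof -
  define z where "z = transpose Q *v x"
  have z: "z$j = column j Q \<bullet> x" for j unfolding z_def by (rule transpose_mult_vector_nth)
  have zz: "(\<Sum>j\<in>UNIV. (z$j)\<^sup>2) = x \<bullet> x" unfolding z_def by (rule orthogonal_matrix_sum_sq[OF Q(1)])
  have "z \<noteq> 0" using zz \<open>x \<noteq> 0\<close> by auto
  then obtain j0 where j0: "z$j0 \<noteq> 0" by (auto simp: vec_eq_iff)
  have "x \<bullet> (B *v x) = (\<Sum>j\<in>UNIV. b$j * (z$j)\<^sup>2)"
    unfolding z_def by (rule eigvals_quadratic_form[OF Q(2)])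
  also have "\<dots> < (\<Sum>j\<in>UNIV. t * (z$j)\<^sup>2)"
  proof (rule sum_strict_mono_ex1)
    show "\<forall>j\<in>UNIV. b$j * (z$j)\<^sup>2 \<le> t * (z$j)\<^sup>2"
    proof
      fix j
      show "b$j * (z$j)\<^sup>2 \<le> t * (z$j)\<^sup>2"
      proof (cases "t \<le> b$j")
        case True then show ?thesis using x z by simp
      next
        case False then show ?thesis by (intro mult_right_mono) auto
      qed
    qed
    have "b$j0 < t" using x z j0 by force
    then show "\<exists>j\<in>UNIV. b$j * (z$j)\<^sup>2 < t * (z$j)\<^sup>2"
      using j0 by (intro bexI[of _ j0] mult_strict_right_mono) auto
  qed simp
  also have "\<dots> = t * (x \<bullet> x)" by (simp only: zz[symmetric] sum_distrib_left)
  finally show ?thesis .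
qed

text \<open>Courant--Fischer: if the counts were in the wrong order, some \<open>x \<noteq> 0\<close> would be orthogonal
  to the eigenvectors of \<open>A\<close> below \<open>t\<close> and to those of \<open>B\<close> at or above \<open>t\<close>, and then
  \<open>t |x|\<^sup>2 \<le> x \<bullet> A x \<le> x \<bullet> B x < t |x|\<^sup>2\<close>.\<close>
lemma eigvals_count_mono:
  fixes A B P Q :: "real^'n::finite^'n"
  assumes P: "orthogonal_matrix P" "A = P ** diag_mat a ** transpose P"
    and Q: "orthogonal_matrix Q" "B = Q ** diag_mat b ** transpose Q"
    and le: "\<And>x. x \<bullet> (A *v x) \<le> x \<bullet> (B *v x)"
  shows "card {i. t \<le> a$i} \<le> card {j. t \<le> b$j}"
proof (rule ccontr)
  assume less: "\<not> ?thesis"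
  define C where "C = (\<lambda>i. column i P) ` {i. a$i < t} \<union> (\<lambda>j. column j Q) ` {j. t \<le> b$j}"
  have "card C \<le> card {i. a$i < t} + card {j. t \<le> b$j}"
    unfolding C_def by (rule card_Un_le[THEN order_trans]) (intro add_mono card_image_le; simp)
  also have "{i. a$i < t} = UNIV - {i. t \<le> a$i}" by auto
  finally have "card C < CARD('n)"
    using less card_mono[of UNIV "{i. t \<le> a$i}"] by (simp add: card_Diff_subset)
  then obtain x where x: "x \<noteq> 0" "\<forall>c\<in>C. x \<bullet> c = 0"
    using exists_nonzero_orthogonal[of C] by (auto simp: C_def)
  have "t * (x \<bullet> x) \<le> x \<bullet> (A *v x)"
    using x(2) by (intro eigvals_quadratic_ge[OF P]) (auto simp: C_def inner_commute)
  moreover have "x \<bullet> (B *v x) < t * (x \<bullet> x)"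
    using x by (intro eigvals_quadratic_less[OF Q]) (auto simp: C_def inner_commute)
  ultimately show False using le[of x] by simp
qed

lemma eigvals_pos_definite:
  fixes P A :: "real^'n::finite^'n"
  assumes P: "orthogonal_matrix P" "A = P ** diag_mat a ** transpose P"
    and pd: "\<And>x. x \<noteq> 0 \<Longrightarrow> x \<bullet> (A *v x) > 0"
  shows "a \<in> Gamma_plus"
  unfolding Gamma_plus_def
proof (intro CollectI allI)
  fix i
  define x where "x = P *v axis i 1"
  have tx: "transpose P *v x = axis i 1"
    using P(1) unfolding x_def orthogonal_matrix_def
    by (simp only: matrix_vector_mul_assoc matrix_vector_mul_lid)
  then have "x \<noteq> 0" by auto
  then have "0 < x \<bullet> (A *v x)" by (rule pd)
  also have "\<dots> = (\<Sum>k\<in>UNIV. a$k * ((axis i 1 :: real^'n)$k)\<^sup>2)"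
    unfolding tx[symmetric] by (rule eigvals_quadratic_form[OF P(2)])
  also have "\<dots> = a$i" by (simp add: axis_def if_distrib if_distribR sum.delta cong: if_cong)
  finally show "0 < a$i" .
qed

section \<open>Monotone symmetric functions of eigenvalues\<close>

lemma card_dominance_remove_max:
  fixes a b :: "'i \<Rightarrow> real"
  assumes A: "finite A" "i0 \<in> A" "\<forall>i\<in>A. a i \<le> a i0"
    and B: "finite B" "j0 \<in> B" "\<forall>j\<in>B. b j \<le> b j0"
    and dom: "\<And>t. card {i\<in>A. t \<le> a i} \<le> card {j\<in>B. t \<le> b j}"
  shows "a i0 \<le> b j0"
    and "card {i\<in>A - {i0}. t \<le> a i} \<le> card {j\<in>B - {j0}. t \<le> b j}"
proof -
  have "0 < card {i\<in>A. a i0 \<le> a i}" using A by (auto simp: card_gt_0_iff)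
  then have "0 < card {j\<in>B. a i0 \<le> b j}" using dom[of "a i0"] by linarith
  then obtain j where "j \<in> B" "a i0 \<le> b j" by (auto simp: card_gt_0_iff)
  with B(3) show ab: "a i0 \<le> b j0" by force
  show "card {i\<in>A - {i0}. t \<le> a i} \<le> card {j\<in>B - {j0}. t \<le> b j}"
  proof (cases "t \<le> a i0")
    case True
    have "{i\<in>A - {i0}. t \<le> a i} = {i\<in>A. t \<le> a i} - {i0}"
      "{j\<in>B - {j0}. t \<le> b j} = {j\<in>B. t \<le> b j} - {j0}" by auto
    moreover have "i0 \<in> {i\<in>A. t \<le> a i}" "j0 \<in> {j\<in>B. t \<le> b j}" using A B True ab by auto
    ultimately show ?thesis using A(1) B(1) dom[of t] by (simp add: card_Diff_singleton)
  next
    case False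
    then have "{i\<in>A - {i0}. t \<le> a i} = {}" using A(3) by force
    then show ?thesis by (metis card.empty le0)
  qed
qed

lemma card_dominance_imp_matching:
  fixes a b :: "'i \<Rightarrow> real"
  assumes "finite A" "finite B" "card A = card B"
    and "\<And>t. card {i\<in>A. t \<le> a i} \<le> card {j\<in>B. t \<le> b j}"
  shows "\<exists>\<sigma>. bij_betw \<sigma> A B \<and> (\<forall>i\<in>A. a i \<le> b (\<sigma> i))"
  using assms
proof (induction "card A" arbitrary: A B)
  case 0
  then show ?case by (auto simp: bij_betw_def)
next
  case (Suc k)
  then have "A \<noteq> {}" "B \<noteq> {}" by auto
  have "Max (a ` A) \<in> a ` A" "Max (b ` B) \<in> b ` B"
    using Suc.prems(1,2) \<open>A \<noteq> {}\<close> \<open>B \<noteq> {}\<close> by simp_all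
  then obtain i0 j0 where "i0 \<in> A" "a i0 = Max (a ` A)" "j0 \<in> B" "b j0 = Max (b ` B)"
    by (metis imageE)
  then have i0: "i0 \<in> A" "\<forall>i\<in>A. a i \<le> a i0" and j0: "j0 \<in> B" "\<forall>j\<in>B. b j \<le> b j0"
    using Suc.prems(1,2) by simp_all
  note remove = card_dominance_remove_max[OF Suc.prems(1) i0 Suc.prems(2) j0 Suc.prems(4)]
  obtain \<sigma> where \<sigma>: "bij_betw \<sigma> (A - {i0}) (B - {j0})" "\<forall>i\<in>A - {i0}. a i \<le> b (\<sigma> i)"
    using Suc.hyps(1)[of "A - {i0}" "B - {j0}"] Suc.hyps(2) Suc.prems(1-3) i0(1) j0(1) remove(2)
    by (metis card_Diff_singleton diff_Suc_1 finite_Diff)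
  have "bij_betw (\<sigma>(i0 := j0)) (A - {i0}) (B - {j0})"
    using \<sigma>(1) by (rule bij_betw_cong[THEN iffD1, rotated]) simp
  moreover have "bij_betw (\<sigma>(i0 := j0)) {i0} {j0}" by (simp add: bij_betw_def)
  ultimately have "bij_betw (\<sigma>(i0 := j0)) (A - {i0} \<union> {i0}) (B - {j0} \<union> {j0})"
    by (rule bij_betw_combine) simp
  moreover have "A - {i0} \<union> {i0} = A" "B - {j0} \<union> {j0} = B" using i0 j0 by auto
  ultimately show ?case using \<sigma>(2) remove(1) by (intro exI[of _ "\<sigma>(i0 := j0)"]) auto
qed

lemma card_dominance_imp_permutation:
  fixes a b :: "real^'n::finite"
  assumes "\<And>t. card {i. t \<le> a$i} \<le> card {j. t \<le> b$j}"
  shows "\<exists>\<sigma>. \<sigma> permutes (UNIV::'n set) \<and> (\<forall>i. a$i \<le> b$(\<sigma> i))"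
proof -
  obtain \<sigma> where "bij_betw \<sigma> (UNIV::'n set) UNIV" "\<forall>i. a$i \<le> b$(\<sigma> i)"
    using card_dominance_imp_matching[of UNIV UNIV "\<lambda>i. a$i" "\<lambda>j. b$j"] assms by auto
  then show ?thesis by (blast intro: bij_imp_permutes)
qed

lemma linear_nonneg_if_pos_on_axes:
  fixes L :: "real^'n::finite \<Rightarrow> real"
  assumes "linear L" "\<And>i. L (axis i 1) > 0" "\<And>i. v$i \<ge> 0"
  shows "L v \<ge> 0"
proof -
  have "L v = L (\<Sum>i\<in>UNIV. v$i *\<^sub>R axis i 1)"
    using basis_expansion[of v] by (simp add: scalar_mult_eq_scaleR)
  also have "\<dots> = (\<Sum>i\<in>UNIV. v$i * L (axis i 1))"
    by (simp add: linear_sum[OF assms(1)] linear_cmul[OF assms(1)])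
  also have "\<dots> \<ge> 0" using assms(2,3) by (intro sum_nonneg) (simp add: less_imp_le)
  finally show ?thesis .
qed

lemma mono_if_pos_partials:
  fixes F :: "real^'n::finite \<Rightarrow> real"
  assumes F_mono: "\<And>l. l \<in> Gamma_plus \<Longrightarrow>
                 \<exists>F'. (F has_derivative F') (at l) \<and> (\<forall>i. F' (axis i 1) > 0)"
    and a: "a \<in> Gamma_plus" and ab: "\<And>i. a$i \<le> b$i"
  shows "F a \<le> F b"
proof -
  define g where "g = (\<lambda>s. F (a + s *\<^sub>R (b - a)))"
  have g: "\<exists>d. (g has_real_derivative d) (at s) \<and> d \<ge> 0" if "0 \<le> s" for s
  proof -
    have "a + s *\<^sub>R (b - a) \<in> Gamma_plus"
      using a ab that unfolding Gamma_plus_def by (auto intro!: add_pos_nonneg)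
    then obtain F' where F': "(F has_derivative F') (at (a + s *\<^sub>R (b - a)))" "\<forall>i. F' (axis i 1) > 0"
      using F_mono by blast
    have "F' (b - a) \<ge> 0"
      by (rule linear_nonneg_if_pos_on_axes[OF has_derivative_linear[OF F'(1)]]) (use F'(2) ab in auto)
    then show ?thesis using has_real_derivative_line[OF F'(1)] unfolding g_def by blast
  qed
  have "g 0 \<le> g 1"
  proof (rule DERIV_nonneg_imp_increasing_open[of 0 1 g])
    have "isCont g s" if "0 \<le> s" for s using g[OF that] DERIV_isCont by blast
    then show "continuous_on {0..1} g" by (intro continuous_at_imp_continuous_on) auto
  qed (use g in auto)
  then show ?thesis by (simp add: g_def)
qed

lemma apply_eig_spectral:
  fixes A :: "real^'n::finite^'n"
  assumes "transpose A = A"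
  obtains P a where "orthogonal_matrix P" "A = P ** diag_mat a ** transpose P" "apply_eig F A = F a"
proof -
  have "eigvals A (SOME l. eigvals A l)" using symmetric_matrix_eigvals[OF assms] by (rule someI_ex)
  then show thesis using that unfolding apply_eig_def eigvals_def by blast
qed

lemma apply_eig_pos:
  fixes A :: "real^'n::finite^'n"
  assumes F_pos: "\<And>l. l \<in> Gamma_plus \<Longrightarrow> F l > 0"
    and "transpose A = A" "\<And>x. x \<noteq> 0 \<Longrightarrow> x \<bullet> (A *v x) > 0"
  shows "apply_eig F A > 0"
proof -
  obtain P a where P: "orthogonal_matrix P" "A = P ** diag_mat a ** transpose P" "apply_eig F A = F a"
    using apply_eig_spectral[OF assms(2)] .
  show ?thesis unfolding P(3) by (rule F_pos[OF eigvals_pos_definite[OF P(1,2) assms(3)]])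
qed

lemma apply_eig_le_if_loewner:
  fixes F :: "real^'n::finite \<Rightarrow> real" and A B :: "real^'n^'n"
  assumes F_sym: "\<And>\<sigma> l. \<sigma> permutes (UNIV :: 'n set) \<Longrightarrow> l \<in> Gamma_plus \<Longrightarrow>
                 F (\<chi> i. l $ (\<sigma> i)) = F l"
    and F_hom: "\<And>t l. t > 0 \<Longrightarrow> l \<in> Gamma_plus \<Longrightarrow> F (t *\<^sub>R l) = t * F l"
    and F_mono: "\<And>l. l \<in> Gamma_plus \<Longrightarrow>
                 \<exists>F'. (F has_derivative F') (at l) \<and> (\<forall>i. F' (axis i 1) > 0)"
    and A: "transpose A = A" "\<And>x. x \<noteq> 0 \<Longrightarrow> x \<bullet> (A *v x) > 0"
    and B: "transpose B = B" "\<And>x. x \<noteq> 0 \<Longrightarrow> x \<bullet> (B *v x) > 0"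
    and M: "M > 0" and le: "\<And>x. x \<bullet> (A *v x) \<le> M * (x \<bullet> (B *v x))"
  shows "apply_eig F A \<le> M * apply_eig F B"
proof -
  obtain P a where P: "orthogonal_matrix P" "A = P ** diag_mat a ** transpose P" "apply_eig F A = F a"
    using apply_eig_spectral[OF A(1)] .
  obtain Q b where Q: "orthogonal_matrix Q" "B = Q ** diag_mat b ** transpose Q" "apply_eig F B = F b"
    using apply_eig_spectral[OF B(1)] .
  have a: "a \<in> Gamma_plus" using eigvals_pos_definite[OF P(1,2) A(2)] .
  have b: "b \<in> Gamma_plus" using eigvals_pos_definite[OF Q(1,2) B(2)] .
  have Mb: "M *\<^sub>R b \<in> Gamma_plus" using b M by (simp add: Gamma_plus_def)
  have "x \<bullet> ((Q ** diag_mat (M *\<^sub>R b) ** transpose Q) *v x) = M * (x \<bullet> (B *v x))" for x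
    unfolding eigvals_quadratic_form[OF refl, of x Q] eigvals_quadratic_form[OF Q(2), of x]
    by (simp add: sum_distrib_left mult.assoc)
  then have "card {i. t \<le> a$i} \<le> card {j. t \<le> (M *\<^sub>R b)$j}" for t
    by (intro eigvals_count_mono[OF P(1,2) Q(1) refl]) (simp only: le)
  then obtain \<sigma> where \<sigma>: "\<sigma> permutes (UNIV::'n set)" "\<forall>i. a$i \<le> (M *\<^sub>R b)$(\<sigma> i)"
    using card_dominance_imp_permutation by blast
  define c where "c = (\<chi> i. (M *\<^sub>R b)$(\<sigma> i))"
  have "F a \<le> F c"
  proof (rule mono_if_pos_partials[OF F_mono a])
    fix i
    show "a$i \<le> c$i" using \<sigma>(2) by (simp add: c_def)
  qed
  also have "F c = F (M *\<^sub>R b)" unfolding c_def by (rule F_sym[OF \<sigma>(1) Mb])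
  also have "\<dots> = M * F b" by (rule F_hom[OF M b])
  finally show ?thesis unfolding P(3) Q(3) .
qed

section \<open>Tangent frames and the matrix \<open>D\<^sup>2u + u I\<close>\<close>

definition frame_vector :: "('n::finite \<Rightarrow> real^'m::finite) \<Rightarrow> real^'n \<Rightarrow> real^'m" where
  "frame_vector e \<xi> = (\<Sum>i\<in>UNIV. \<xi>$i *\<^sub>R e i)"

lemma tangent_frame_exists:
  fixes x :: "real^'m::finite"
  assumes dim: "CARD('m) = CARD('n) + 1" and x: "x \<noteq> 0"
  obtains e :: "'n::finite \<Rightarrow> real^'m" where "tangent_frame x e"
proof -
  obtain B where B: "B \<subseteq> {v. x \<bullet> v = 0}" "pairwise orthogonal B" "\<And>v. v \<in> B \<Longrightarrow> norm v = 1"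
     "independent B" "card B = dim {v. x \<bullet> v = 0}"
    using orthonormal_basis_subspace[OF subspace_hyperplane[of x]] by metis
  have "finite B" using B(4) by (rule independent_imp_finite)
  moreover have "card B = CARD('n)" using B(5) dim_hyperplane[OF x] dim by simp
  ultimately have "\<exists>e :: 'n \<Rightarrow> real^'m. bij_betw e UNIV B" by (simp add: bij_betw_iff_card)
  then obtain e :: "'n \<Rightarrow> real^'m" where e: "bij_betw e UNIV B" ..
  have eB: "e i \<in> B" for i using e by (auto simp: bij_betw_def)
  have einj: "e i = e j \<Longrightarrow> i = j" for i j using e by (auto simp: bij_betw_def inj_on_def)
  have "e i \<bullet> x = 0" for i using B(1) eB[of i] by (auto simp: inner_commute)
  moreover have "e i \<bullet> e j = (if i = j then 1 else 0)" for i j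
  proof (cases "i = j")
    case True then show ?thesis using B(3)[OF eB[of i]] by (simp add: norm_eq_1)
  next
    case False then show ?thesis using B(2) eB einj unfolding pairwise_def orthogonal_def by metis
  qed
  ultimately show thesis using that unfolding tangent_frame_def by blast
qed

lemma frame_vector_tangent:
  assumes "tangent_frame x e"
  shows "frame_vector e \<xi> \<bullet> x = 0"
  using assms by (simp add: tangent_frame_def frame_vector_def inner_sum_left)

lemma frame_vector_inner_self:
  assumes "tangent_frame x e"
  shows "frame_vector e \<xi> \<bullet> frame_vector e \<xi> = \<xi> \<bullet> \<xi>"
proof -
  have "frame_vector e \<xi> \<bullet> frame_vector e \<xi> = (\<Sum>i\<in>UNIV. \<Sum>j\<in>UNIV. \<xi>$i * (\<xi>$j * (e j \<bullet> e i)))"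
    by (simp add: frame_vector_def inner_sum_left inner_sum_right sum_distrib_left mult_ac)
  also have "\<dots> = (\<Sum>i\<in>UNIV. \<xi>$i * \<xi>$i)"
  proof (rule sum.cong[OF refl])
    fix i
    have "(\<Sum>j\<in>UNIV. \<xi>$i * (\<xi>$j * (e j \<bullet> e i))) = (\<Sum>j\<in>UNIV. if j = i then \<xi>$i * \<xi>$j else 0)"
      using assms by (intro sum.cong) (auto simp: tangent_frame_def)
    then show "(\<Sum>j\<in>UNIV. \<xi>$i * (\<xi>$j * (e j \<bullet> e i))) = \<xi>$i * \<xi>$i" by simp
  qed
  also have "\<dots> = \<xi> \<bullet> \<xi>" by (simp add: inner_vec_def)
  finally show ?thesis .
qed

lemma quadratic_form_sum:
  fixes A :: "real^'n::finite^'n"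
  shows "x \<bullet> (A *v x) = (\<Sum>i\<in>UNIV. \<Sum>j\<in>UNIV. x$i * x$j * A$i$j)"
  by (simp add: inner_vec_def matrix_vector_mult_def sum_distrib_left mult_ac)

lemma W_matrix_quadratic_form:
  "\<xi> \<bullet> (W_matrix u x e *v \<xi>) = sph_hess u x (frame_vector e \<xi>) (frame_vector e \<xi>) + u x * (\<xi> \<bullet> \<xi>)"
proof -
  define H where "H = hess (hom0_ext u) x"
  have lin: "linear ((*v) H)" by (rule matrix_vector_mul_linear)
  have "H *v frame_vector e \<xi> = (\<Sum>j\<in>UNIV. \<xi>$j *\<^sub>R (H *v e j))"
    by (simp add: frame_vector_def linear_sum[OF lin] linear_cmul[OF lin])
  then have "sph_hess u x (frame_vector e \<xi>) (frame_vector e \<xi>)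
      = (\<Sum>i\<in>UNIV. \<Sum>j\<in>UNIV. \<xi>$i * \<xi>$j * (e i \<bullet> (H *v e j)))"
    by (simp add: sph_hess_def H_def[symmetric] frame_vector_def inner_sum_left inner_sum_right
        sum_distrib_left mult_ac) (subst sum.swap, simp add: mult_ac)
  moreover have "\<xi> \<bullet> (W_matrix u x e *v \<xi>)
      = (\<Sum>i\<in>UNIV. \<Sum>j\<in>UNIV. \<xi>$i * \<xi>$j * (e i \<bullet> (H *v e j)) + \<xi>$i * \<xi>$j * (if i = j then u x else 0))"
    unfolding quadratic_form_sum by (simp add: W_matrix_def sph_hess_def H_def distrib_left)
  moreover have "(\<Sum>i\<in>UNIV. \<Sum>j\<in>UNIV. \<xi>$i * \<xi>$j * (if i = j then u x else 0)) = u x * (\<xi> \<bullet> \<xi>)"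
    by (simp add: inner_vec_def sum_distrib_left if_distrib sum.delta mult_ac cong: if_cong)
  ultimately show ?thesis by (simp add: sum.distrib)
qed

lemma W_matrix_symmetric:
  assumes "smooth_on (- {0}) (hom0_ext u)" "x \<noteq> 0"
  shows "transpose (W_matrix u x e) = W_matrix u x e"
proof -
  have "transpose (hess (hom0_ext u) x) = hess (hom0_ext u) x"
    using assms smooth_on_differentiable_at[OF assms(1) open_Compl]
    by (intro hess_symmetric[of "- {0}"]) auto
  then have "e j \<bullet> (hess (hom0_ext u) x *v e i) = e i \<bullet> (hess (hom0_ext u) x *v e j)" for i j
    by (metis inner_commute symmetric_matrix_inner_commute)
  then show ?thesis by (simp add: vec_eq_iff transpose_def W_matrix_def sph_hess_def)
qed

lemma W_matrix_pos_definite: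
  assumes "uniformly_convex u" "x \<in> unit_sphere" "tangent_frame x e" "\<xi> \<noteq> 0"
  shows "\<xi> \<bullet> (W_matrix u x e *v \<xi>) > 0"
proof -
  have "frame_vector e \<xi> \<noteq> 0"
    using frame_vector_inner_self[OF assms(3)] assms(4) by (metis inner_eq_zero_iff inner_zero_left)
  then have "sph_hess u x (frame_vector e \<xi>) (frame_vector e \<xi>)
      + u x * (frame_vector e \<xi> \<bullet> frame_vector e \<xi>) > 0"
    using assms(1,2) frame_vector_tangent[OF assms(3)] unfolding uniformly_convex_def by blast
  then show ?thesis
    by (simp only: W_matrix_quadratic_form frame_vector_inner_self[OF assms(3)])
qed

section \<open>Comparison of two solutions\<close>

lemma powr_balance_imp_le:
  fixes g1 g2 a1 a2 M \<beta> :: real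
  assumes eq: "g1 * a1 powr \<beta> = g2 * a2 powr \<beta>"
    and "0 < g1" "0 \<le> a1" "a1 \<le> M * a2" "0 < a2" "0 < M" "0 \<le> \<beta>"
  shows "g2 * M powr (- \<beta>) \<le> g1"
proof -
  have "g2 * a2 powr \<beta> \<le> g1 * (M * a2) powr \<beta>"
    unfolding eq[symmetric] using assms(2-7) by (intro mult_left_mono powr_mono2) auto
  also have "\<dots> = (g1 * M powr \<beta>) * a2 powr \<beta>" using assms by (simp add: powr_mult)
  finally have "g2 \<le> g1 * M powr \<beta>" using \<open>0 < a2\<close> by simp
  then have "g2 * M powr (- \<beta>) \<le> g1 * M powr \<beta> * M powr (- \<beta>)" by (simp add: mult_right_mono)
  also have "\<dots> = g1" using \<open>0 < M\<close> by (simp add: powr_minus)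
  finally show ?thesis .
qed

lemma smooth_hom0_ext_continuous_on_sphere:
  assumes "smooth_on (- {0}) (hom0_ext u)"
  shows "continuous_on unit_sphere u"
proof -
  have "isCont (hom0_ext u) x" if "x \<in> - {0}" for x
    using smooth_on_differentiable_at(1)[OF assms _ that]
    by (simp add: open_Compl differentiable_imp_continuous_within)
  then have "continuous_on (- {0}) (hom0_ext u)" by (simp add: continuous_at_imp_continuous_on)
  then have "continuous_on unit_sphere (hom0_ext u)" by (rule continuous_on_subset) auto
  then show ?thesis by (rule continuous_on_eq) (simp add: hom0_ext_def)
qed

lemma touching_grad_W_matrix:
  fixes u1 u2 :: "real^'m::finite \<Rightarrow> real"
  assumes s1: "smooth_on (- {0}) (hom0_ext u1)" and s2: "smooth_on (- {0}) (hom0_ext u2)"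
    and x0: "x0 \<in> unit_sphere"
    and le: "\<forall>x\<in>unit_sphere. u1 x \<le> M * u2 x" and eq: "u1 x0 = M * u2 x0"
  shows "sph_grad u1 x0 = M *\<^sub>R sph_grad u2 x0"
    and "\<xi> \<bullet> (W_matrix u1 x0 e *v \<xi>) \<le> M * (\<xi> \<bullet> (W_matrix u2 x0 e *v \<xi>))"
proof -
  have oS: "open (- {0 :: real^'m})" by (simp add: open_Compl)
  have x0S: "x0 \<in> - {0}" using x0 by auto
  have le': "hom0_ext u1 y \<le> M * hom0_ext u2 y" if "y \<in> - {0}" for y
  proof -
    have "y /\<^sub>R norm y \<in> unit_sphere" using that by simp
    then show ?thesis using le by (simp add: hom0_ext_def)
  qed
  have eq': "hom0_ext u1 x0 = M * hom0_ext u2 x0" using x0 eq by (simp add: hom0_ext_def)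
  note d = smooth_on_differentiable_at[OF _ oS]
  note touch = touching_from_above_grad_hess[OF oS x0S d(1)[OF s1] d(1)[OF s2]
      d(2)[OF s1 x0S] d(2)[OF s2 x0S] le' eq']
  show "sph_grad u1 x0 = M *\<^sub>R sph_grad u2 x0" using touch(1) by (simp add: sph_grad_def)
  show "\<xi> \<bullet> (W_matrix u1 x0 e *v \<xi>) \<le> M * (\<xi> \<bullet> (W_matrix u2 x0 e *v \<xi>))"
    using touch(2)[of "frame_vector e \<xi>"] eq
    by (simp add: W_matrix_quadratic_form sph_hess_def algebra_simps)
qed

locale sphere_curvature_equation =
  fixes \<beta> :: real
    and F :: "real^'n::finite \<Rightarrow> real"
    and G :: "real^'m::finite \<Rightarrow> real \<Rightarrow> real \<Rightarrow> real"
    and c :: real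
  assumes dim: "CARD('m) = CARD('n) + 1"
    and beta: "\<beta> > 0"
    and F_sym: "\<And>\<sigma> l. \<sigma> permutes (UNIV :: 'n set) \<Longrightarrow> l \<in> Gamma_plus \<Longrightarrow>
                 F (\<chi> i. l $ (\<sigma> i)) = F l"
    and F_pos: "\<And>l. l \<in> Gamma_plus \<Longrightarrow> F l > 0"
    and F_hom: "\<And>t l. t > 0 \<Longrightarrow> l \<in> Gamma_plus \<Longrightarrow> F (t *\<^sub>R l) = t * F l"
    and F_mono: "\<And>l. l \<in> Gamma_plus \<Longrightarrow>
                 \<exists>F'. (F has_derivative F') (at l) \<and> (\<forall>i. F' (axis i 1) > 0)"
    and G_pos: "\<And>x s1 s2. x \<in> unit_sphere \<Longrightarrow> s1 > 0 \<Longrightarrow> s2 > 0 \<Longrightarrow> G x s1 s2 > 0"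
    and G_cond: "\<And>x s1 s2 m. x \<in> unit_sphere \<Longrightarrow> s1 > 0 \<Longrightarrow> s2 > 0 \<Longrightarrow> m > 0 \<Longrightarrow>
                 G x (m * s1) (m * s2) \<ge> G x s1 s2 * m powr (- \<beta>) \<Longrightarrow> m \<le> 1"
begin

definition is_solution :: "(real^'m \<Rightarrow> real) \<Rightarrow> bool" where
  "is_solution u \<longleftrightarrow> smooth_on (- {0}) (hom0_ext u) \<and> (\<forall>x\<in>unit_sphere. u x > 0)
    \<and> uniformly_convex u
    \<and> (\<forall>x\<in>unit_sphere. \<forall>e::'n \<Rightarrow> real^'m. tangent_frame x e \<longrightarrow>
         G x (u x) (sqrt ((u x)\<^sup>2 + (norm (sph_grad u x))\<^sup>2)) * apply_eig F (W_matrix u x e) powr \<beta> = c)"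

lemma max_ratio_le_one:
  assumes sol1: "is_solution u1" and sol2: "is_solution u2"
    and x0: "x0 \<in> unit_sphere" and M: "M > 0"
    and le: "\<forall>x\<in>unit_sphere. u1 x \<le> M * u2 x" and eq: "u1 x0 = M * u2 x0"
  shows "M \<le> 1"
proof -
  have "x0 \<noteq> 0" using x0 by auto
  then obtain e :: "'n \<Rightarrow> real^'m" where e: "tangent_frame x0 e"
    using tangent_frame_exists[OF dim] by blast
  have u2: "u2 x0 > 0" using sol2 x0 by (simp add: is_solution_def)
  have "smooth_on (- {0}) (hom0_ext u1)" "smooth_on (- {0}) (hom0_ext u2)"
    using sol1 sol2 by (simp_all add: is_solution_def)
  note touch = touching_grad_W_matrix[OF this x0 le eq]
  have W_sym: "transpose (W_matrix u x0 e) = W_matrix u x0 e"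
    and W_pd: "\<And>\<xi>. \<xi> \<noteq> 0 \<Longrightarrow> \<xi> \<bullet> (W_matrix u x0 e *v \<xi>) > 0"
    and FW_pos: "apply_eig F (W_matrix u x0 e) > 0"
    and equation: "G x0 (u x0) (sqrt ((u x0)\<^sup>2 + (norm (sph_grad u x0))\<^sup>2))
                     * apply_eig F (W_matrix u x0 e) powr \<beta> = c"
    if "is_solution u" for u
  proof -
    show sym: "transpose (W_matrix u x0 e) = W_matrix u x0 e"
      using that by (intro W_matrix_symmetric \<open>x0 \<noteq> 0\<close>) (simp add: is_solution_def)
    show pd: "\<And>\<xi>. \<xi> \<noteq> 0 \<Longrightarrow> \<xi> \<bullet> (W_matrix u x0 e *v \<xi>) > 0"
      by (rule W_matrix_pos_definite) (use that x0 e in \<open>simp_all add: is_solution_def\<close>)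
    show "apply_eig F (W_matrix u x0 e) > 0" by (rule apply_eig_pos[OF F_pos sym pd])
    show "G x0 (u x0) (sqrt ((u x0)\<^sup>2 + (norm (sph_grad u x0))\<^sup>2))
        * apply_eig F (W_matrix u x0 e) powr \<beta> = c"
      using that x0 e unfolding is_solution_def by blast
  qed
  have FW: "apply_eig F (W_matrix u1 x0 e) \<le> M * apply_eig F (W_matrix u2 x0 e)"
    by (rule apply_eig_le_if_loewner[OF F_sym F_hom F_mono W_sym[OF sol1] W_pd[OF sol1]
          W_sym[OF sol2] W_pd[OF sol2] M touch(2)])
  define \<rho> where "\<rho> = sqrt ((u2 x0)\<^sup>2 + (norm (sph_grad u2 x0))\<^sup>2)"
  have \<rho>: "\<rho> > 0" using u2 by (simp add: \<rho>_def add_pos_nonneg)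
  have \<rho>1: "sqrt ((u1 x0)\<^sup>2 + (norm (sph_grad u1 x0))\<^sup>2) = M * \<rho>"
    using M by (simp add: \<rho>_def eq touch(1) power_mult_distrib real_sqrt_mult
        distrib_left[symmetric])
  have "G x0 (M * u2 x0) (M * \<rho>) * apply_eig F (W_matrix u1 x0 e) powr \<beta>
      = G x0 (u2 x0) \<rho> * apply_eig F (W_matrix u2 x0 e) powr \<beta>"
    using equation[OF sol1] equation[OF sol2] unfolding \<rho>1 \<rho>_def[symmetric] unfolding eq by simp
  then have "G x0 (u2 x0) \<rho> * M powr (- \<beta>) \<le> G x0 (M * u2 x0) (M * \<rho>)"
    by (rule powr_balance_imp_le)
      (use G_pos[OF x0] FW_pos[OF sol1] FW_pos[OF sol2] FW u2 \<rho> M beta in auto)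
  then show "M \<le> 1" by (rule G_cond[OF x0 u2 \<rho> M])
qed

lemma solution_le_solution:
  assumes sol1: "is_solution u1" and sol2: "is_solution u2"
  shows "\<forall>x\<in>unit_sphere. u1 x \<le> u2 x"
proof -
  have u2: "u2 x > 0" if "x \<in> unit_sphere" for x :: "real^'m"
    using sol2 that by (simp add: is_solution_def)
  then have "u2 x \<noteq> 0" if "x \<in> unit_sphere" for x :: "real^'m" using that by fastforce
  then have "continuous_on unit_sphere (\<lambda>x. u1 x / u2 x)"
    using sol1 sol2 unfolding is_solution_def
    by (intro continuous_on_divide smooth_hom0_ext_continuous_on_sphere) auto
  moreover have "axis undefined 1 \<in> (unit_sphere :: (real^'m) set)" by simp
  ultimately obtain x0 where x0: "x0 \<in> unit_sphere" "\<forall>x\<in>unit_sphere. u1 x / u2 x \<le> u1 x0 / u2 x0"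
    using continuous_attains_sup[OF compact_sphere] by blast
  define M where "M = u1 x0 / u2 x0"
  have M: "M > 0" using sol1 u2 x0(1) by (simp add: M_def is_solution_def)
  have le: "\<forall>x\<in>unit_sphere. u1 x \<le> M * u2 x"
    using x0(2) u2 by (simp add: M_def pos_divide_le_eq)
  have eq: "u1 x0 = M * u2 x0" using u2[OF x0(1)] by (simp add: M_def)
  have "M \<le> 1" by (rule max_ratio_le_one[OF sol1 sol2 x0(1) M le eq])
  show ?thesis
  proof
    fix x :: "real^'m" assume x: "x \<in> unit_sphere"
    have "u1 x \<le> M * u2 x" using le x by blast
    also have "\<dots> \<le> 1 * u2 x" using \<open>M \<le> 1\<close> u2[OF x] by (intro mult_right_mono) auto
    finally show "u1 x \<le> u2 x" by simp
  qed
qed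

end

theorem theorem5p2:
  fixes \<beta> :: real
    and F :: "real^'n::finite \<Rightarrow> real"
    and G :: "real^'m::finite \<Rightarrow> real \<Rightarrow> real \<Rightarrow> real"
    and c :: real
    and u1 u2 :: "real^'m \<Rightarrow> real"
  assumes dim: "CARD('m) = CARD('n) + 1"
    and beta: "\<beta> > 0"
    and F_sym: "\<And>\<sigma> l. \<sigma> permutes (UNIV :: 'n set) \<Longrightarrow> l \<in> Gamma_plus \<Longrightarrow>
                 F (\<chi> i. l $ (\<sigma> i)) = F l"
    and F_pos: "\<And>l. l \<in> Gamma_plus \<Longrightarrow> F l > 0"
    and F_hom: "\<And>t l. t > 0 \<Longrightarrow> l \<in> Gamma_plus \<Longrightarrow> F (t *\<^sub>R l) = t * F l"
    and F_norm: "F (\<chi> i. 1) powr \<beta> = 1"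
    and F_mono: "\<And>l. l \<in> Gamma_plus \<Longrightarrow>
                 \<exists>F'. (F has_derivative F') (at l) \<and> (\<forall>i. F' (axis i 1) > 0)"
    and G_pos: "\<And>x s1 s2. x \<in> unit_sphere \<Longrightarrow> s1 > 0 \<Longrightarrow> s2 > 0 \<Longrightarrow> G x s1 s2 > 0"
    and G_cond: "\<And>x s1 s2 m. x \<in> unit_sphere \<Longrightarrow> s1 > 0 \<Longrightarrow> s2 > 0 \<Longrightarrow> m > 0 \<Longrightarrow>
                 G x (m * s1) (m * s2) \<ge> G x s1 s2 * m powr (- \<beta>) \<Longrightarrow> m \<le> 1"
    and sol1: "smooth_on (- {0}) (hom0_ext u1)" "\<forall>x\<in>unit_sphere. u1 x > 0" "uniformly_convex u1"
              "\<forall>x\<in>unit_sphere. \<forall>e::'n \<Rightarrow> real^'m. tangent_frame x e \<longrightarrow>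
                 G x (u1 x) (sqrt ((u1 x)\<^sup>2 + (norm (sph_grad u1 x))\<^sup>2))
                   * apply_eig F (W_matrix u1 x e) powr \<beta> = c"
    and sol2: "smooth_on (- {0}) (hom0_ext u2)" "\<forall>x\<in>unit_sphere. u2 x > 0" "uniformly_convex u2"
              "\<forall>x\<in>unit_sphere. \<forall>e::'n \<Rightarrow> real^'m. tangent_frame x e \<longrightarrow>
                 G x (u2 x) (sqrt ((u2 x)\<^sup>2 + (norm (sph_grad u2 x))\<^sup>2))
                   * apply_eig F (W_matrix u2 x e) powr \<beta> = c"
  shows "\<forall>x\<in>unit_sphere. u1 x = u2 x"
proof -
  interpret sphere_curvature_equation \<beta> F G c
    by unfold_locales (fact dim beta F_sym F_pos F_hom F_mono G_pos G_cond)+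
  \<comment> \<open>The normalisation \<open>F_norm\<close> only fixes the scale of \<open>F\<close>; uniqueness does not need it.\<close>
  have sol1': "is_solution u1" and sol2': "is_solution u2"
    using sol1 sol2 unfolding is_solution_def by blast+
  have "\<forall>x\<in>unit_sphere. u1 x \<le> u2 x" by (rule solution_le_solution[OF sol1' sol2'])
  moreover have "\<forall>x\<in>unit_sphere. u2 x \<le> u1 x" by (rule solution_le_solution[OF sol2' sol1'])
  ultimately show ?thesis by (blast intro: antisym)
qed

end
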